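(* Let $\Gamma$ be a distance-regular graph with diameter $D\ge3$, valency $k$, and $a_1\ne0$. Let $\sigma_0,\dots,\sigma_D$ be a nontrivial pseudo cosine sequence which is tight, with auxiliary parameter $\varepsilon$, and write $\sigma=\sigma_1$. Then $\sigma\ne1$, $(\sigma^2-\sigma_2)(1-\varepsilon\sigma)\ne0$, and $$k=h\,\frac{\sigma-\varepsilon}{\sigma-1},\qquad\text{where}\quad h=\frac{(1-\sigma)(1-\sigma_2)}{(\sigma^2-\sigma_2)(1-\varepsilon\sigma)}.$$
   Context: $\Gamma$ is a finite connected undirected graph without loops or multiple edges, distance-regular with diameter $D$, intersection numbers $a_i,b_i,c_i$ ($c_0=0$, $b_D=0$), valency $k=b_0$, $c_i+a_i+b_i=k$. For $\theta\in\mathbb{R}$ the pseudo cosine sequence for $\theta$ is the sequence of reals $\sigma_0,\dots,\sigma_D$ with $\sigma_0=1$ and $c_i\sigma_{i-1}+a_i\sigma_i+b_i\sigma_{i+1}=\theta\sigma_i$ for $0\le i\le D-1$; nontrivial means $\sigma_1\ne1$. Pseudo cosine sequences $\sigma_i$, $\rho_i$ form a tight pair if $(\sigma_i\rho_i)_{i=0}^D$ is a pseudo cosine sequence. For a tight pair of nontrivial pseudo cosine sequences, an auxiliary parameter is a real $\varepsilon$ with $\sigma_i\rho_i-\sigma_{i-1}\rho_{i-1}=\varepsilon(\sigma_{i-1}\rho_i-\sigma_i\rho_{i-1})$ for $1\le i\le D$. When $a_1\ne0$, a nontrivial pseudo cosine sequence is tight if some nontrivial pseudo cosine sequence forms a tight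 pair with it; its auxiliary parameter is the (uniquely determined) auxiliary parameter of that pair. *)

theory Defs
  imports Complex_Main
begin

fun reach :: "'a set \<Rightarrow> ('a \<Rightarrow> 'a \<Rightarrow> bool) \<Rightarrow> nat \<Rightarrow> 'a \<Rightarrow> 'a \<Rightarrow> bool" where
  "reach V E 0 x y = (x = y)"
| "reach V E (Suc n) x y = (\<exists>z\<in>V. E x z \<and> reach V E n z y)"

definition gdist :: "'a set \<Rightarrow> ('a \<Rightarrow> 'a \<Rightarrow> bool) \<Rightarrow> 'a \<Rightarrow> 'a \<Rightarrow> nat" where
  "gdist V E x y = (LEAST n. reach V E n x y)"

definition finite_connected_simple_graph :: "'a set \<Rightarrow> ('a \<Rightarrow> 'a \<Rightarrow> bool) \<Rightarrow> bool" where
  "finite_connected_simple_graph V E \<longleftrightarrow>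
     finite V \<and> V \<noteq> {} \<and>
     (\<forall>x y. E x y \<longrightarrow> x \<in> V \<and> y \<in> V) \<and>
     (\<forall>x y. E x y \<longrightarrow> E y x) \<and>
     (\<forall>x. \<not> E x x) \<and>
     (\<forall>x\<in>V. \<forall>y\<in>V. \<exists>n. reach V E n x y)"

definition diameter :: "'a set \<Rightarrow> ('a \<Rightarrow> 'a \<Rightarrow> bool) \<Rightarrow> nat" where
  "diameter V E = Max {gdist V E x y | x y. x \<in> V \<and> y \<in> V}"

definition distance_regular ::
  "'a set \<Rightarrow> ('a \<Rightarrow> 'a \<Rightarrow> bool) \<Rightarrow> nat \<Rightarrow> (nat \<Rightarrow> nat) \<Rightarrow> (nat \<Rightarrow> nat) \<Rightarrow> (nat \<Rightarrow> nat) \<Rightarrow> bool" where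
  "distance_regular V E D a b c \<longleftrightarrow>
     finite_connected_simple_graph V E \<and> D = diameter V E \<and>
     c 0 = 0 \<and> b D = 0 \<and>
     (\<forall>i\<le>D. \<forall>x\<in>V. \<forall>y\<in>V. gdist V E x y = i \<longrightarrow>
        card {z\<in>V. E y z \<and> gdist V E x z = i} = a i \<and>
        card {z\<in>V. E y z \<and> gdist V E x z = i + 1} = b i \<and>
        (1 \<le> i \<longrightarrow> card {z\<in>V. E y z \<and> gdist V E x z + 1 = i} = c i))"

definition pseudo_cosine ::
  "nat \<Rightarrow> (nat \<Rightarrow> nat) \<Rightarrow> (nat \<Rightarrow> nat) \<Rightarrow> (nat \<Rightarrow> nat) \<Rightarrow> real \<Rightarrow> (nat \<Rightarrow> real) \<Rightarrow> bool" where
  "pseudo_cosine D a b c \<theta> \<sigma> \<longleftrightarrow> \<sigma> 0 = 1 \<and>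
     (\<forall>i<D. (if i = 0 then 0 else real (c i) * \<sigma> (i - 1)) + real (a i) * \<sigma> i
              + real (b i) * \<sigma> (i + 1) = \<theta> * \<sigma> i)"

definition is_pseudo_cosine ::
  "nat \<Rightarrow> (nat \<Rightarrow> nat) \<Rightarrow> (nat \<Rightarrow> nat) \<Rightarrow> (nat \<Rightarrow> nat) \<Rightarrow> (nat \<Rightarrow> real) \<Rightarrow> bool" where
  "is_pseudo_cosine D a b c \<sigma> \<longleftrightarrow> (\<exists>\<theta>. pseudo_cosine D a b c \<theta> \<sigma>)"

definition nontrivial_pc ::
  "nat \<Rightarrow> (nat \<Rightarrow> nat) \<Rightarrow> (nat \<Rightarrow> nat) \<Rightarrow> (nat \<Rightarrow> nat) \<Rightarrow> (nat \<Rightarrow> real) \<Rightarrow> bool" where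
  "nontrivial_pc D a b c \<sigma> \<longleftrightarrow> is_pseudo_cosine D a b c \<sigma> \<and> \<sigma> 1 \<noteq> 1"

definition tight_pair ::
  "nat \<Rightarrow> (nat \<Rightarrow> nat) \<Rightarrow> (nat \<Rightarrow> nat) \<Rightarrow> (nat \<Rightarrow> nat) \<Rightarrow> (nat \<Rightarrow> real) \<Rightarrow> (nat \<Rightarrow> real) \<Rightarrow> bool" where
  "tight_pair D a b c \<sigma> \<rho> \<longleftrightarrow> is_pseudo_cosine D a b c \<sigma> \<and> is_pseudo_cosine D a b c \<rho> \<and>
     is_pseudo_cosine D a b c (\<lambda>i. \<sigma> i * \<rho> i)"

definition auxiliary_parameter :: "nat \<Rightarrow> (nat \<Rightarrow> real) \<Rightarrow> (nat \<Rightarrow> real) \<Rightarrow> real \<Rightarrow> bool" where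
  "auxiliary_parameter D \<sigma> \<rho> \<epsilon> \<longleftrightarrow>
     (\<forall>i\<in>{1..D}. \<sigma> i * \<rho> i - \<sigma> (i - 1) * \<rho> (i - 1)
                 = \<epsilon> * (\<sigma> (i - 1) * \<rho> i - \<sigma> i * \<rho> (i - 1)))"

end

theory Submission
  imports Defs
begin

text \<open>
  Write \<open>k = b 0\<close>, \<open>s = \<sigma> 1\<close>, \<open>r = \<rho> 1\<close>. The recurrences at \<open>i = 1\<close> for \<open>\<sigma>\<close>, \<open>\<rho>\<close>
  and \<open>\<sigma>\<rho>\<close> express \<open>b\<^sub>1\<sigma>\<^sub>2\<close>, \<open>b\<^sub>1\<rho>\<^sub>2\<close> and \<open>b\<^sub>1\<sigma>\<^sub>2\<rho>\<^sub>2\<close> as quadratics in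
  \<open>s\<close>, \<open>r\<close> and \<open>sr\<close>. Comparing \<open>(b\<^sub>1\<sigma>\<^sub>2)(b\<^sub>1\<rho>\<^sub>2)\<close> with \<open>b\<^sub>1(b\<^sub>1\<sigma>\<^sub>2\<rho>\<^sub>2)\<close> and
  cancelling \<open>(1 - s)(1 - r)\<close> gives \<open>k(1 + s)(1 + r) + a\<^sub>1(ksr - 1) = 0\<close>. The auxiliary
  parameter at \<open>i = 1\<close> reads \<open>sr - 1 = \<epsilon>(r - s)\<close>, and eliminating \<open>r\<close> between the two
  (possible when \<open>r \<noteq> s\<close>) gives \<open>k(s\<^sup>2 - \<sigma>\<^sub>2)(1 - \<epsilon>s) = (1 - \<sigma>\<^sub>2)(\<epsilon> - s)\<close>.
  The remaining nondegeneracy conditions, \<open>r \<noteq> s\<close> among them, reduce to excluding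
  \<open>s = -1\<close> and \<open>r = 0\<close>. Only there are the recurrences at \<open>i = 2\<close>, the auxiliary parameter at
  \<open>i = 3\<close> and \<open>a\<^sub>2, b\<^sub>2 \<noteq> 0\<close> needed; in the graph these follow from \<open>a\<^sub>1 \<noteq> 0\<close> and
  \<open>D \<ge> 3\<close>.
\<close>

lemma reach_trans: "reach V E m x y \<Longrightarrow> reach V E n y z \<Longrightarrow> reach V E (m + n) x z"
  by (induction m arbitrary: x) auto

lemma gdist_le: "reach V E n x y \<Longrightarrow> gdist V E x y \<le> n"
  unfolding gdist_def by (rule Least_le)

locale connected_graph =
  fixes V :: "'v set" and E :: "'v \<Rightarrow> 'v \<Rightarrow> bool"
  assumes graph: "finite_connected_simple_graph V E"
begin

lemma finite_V: "finite V"
  using graph unfolding finite_connected_simple_graph_def by blast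

lemma V_nonempty: "V \<noteq> {}"
  using graph unfolding finite_connected_simple_graph_def by blast

lemma edge_in_V: "E x y \<Longrightarrow> x \<in> V \<and> y \<in> V"
  using graph unfolding finite_connected_simple_graph_def by blast

lemma edge_sym: "E x y \<Longrightarrow> E y x"
  using graph unfolding finite_connected_simple_graph_def by blast

lemma edge_irrefl: "\<not> E x x"
  using graph unfolding finite_connected_simple_graph_def by blast

lemma reach_sym: "reach V E n x y \<Longrightarrow> x \<in> V \<Longrightarrow> reach V E n y x"
proof (induction n arbitrary: x)
  case (Suc n)
  then obtain z where z: "z \<in> V" "E x z" "reach V E n z y" by auto
  have "reach V E 1 z x" using z edge_sym Suc.prems by auto
  with Suc.IH z show ?case using reach_trans by fastforce
qed simp

lemma reach_gdist: "x \<in> V \<Longrightarrow> y \<in> V \<Longrightarrow> reach V E (gdist V E x y) x y"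
  using graph unfolding gdist_def finite_connected_simple_graph_def by (meson LeastI_ex)

lemma gdist_sym: "x \<in> V \<Longrightarrow> y \<in> V \<Longrightarrow> gdist V E x y = gdist V E y x"
  by (meson antisym gdist_le reach_gdist reach_sym)

lemma gdist_triangle:
  "x \<in> V \<Longrightarrow> y \<in> V \<Longrightarrow> z \<in> V \<Longrightarrow> gdist V E x z \<le> gdist V E x y + gdist V E y z"
  by (meson gdist_le reach_gdist reach_trans)

lemma gdist_eq_0_iff: "x \<in> V \<Longrightarrow> y \<in> V \<Longrightarrow> gdist V E x y = 0 \<longleftrightarrow> x = y"
  using reach_gdist gdist_le[of V E 0 x y] by fastforce

lemma gdist_eq_1_iff: "x \<in> V \<Longrightarrow> y \<in> V \<Longrightarrow> gdist V E x y = 1 \<longleftrightarrow> E x y"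
proof
  assume "x \<in> V" "y \<in> V" "gdist V E x y = 1"
  then show "E x y" using reach_gdist[of x y] by auto
next
  assume "x \<in> V" "y \<in> V" "E x y"
  then have "gdist V E x y \<le> 1" using gdist_le[of V E 1 x y] by auto
  moreover have "x \<noteq> y" using \<open>E x y\<close> edge_irrefl by blast
  ultimately show "gdist V E x y = 1"
    using gdist_eq_0_iff \<open>x \<in> V\<close> \<open>y \<in> V\<close> by fastforce
qed

lemma gdist_edge_le: "x \<in> V \<Longrightarrow> E y z \<Longrightarrow> gdist V E x z \<le> gdist V E x y + 1"
  using gdist_triangle[of x y z] gdist_eq_1_iff edge_in_V by fastforce

lemma gdist_SucE:
  assumes "x \<in> V" "u \<in> V" "gdist V E x u = Suc n"
  obtains y where "E x y" "gdist V E y u = n"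
proof -
  have "reach V E (Suc n) x u" using reach_gdist assms by metis
  then obtain y where y: "y \<in> V" "E x y" "reach V E n y u" by auto
  have "gdist V E x u \<le> gdist V E y u + 1"
    using gdist_edge_le[of u y x] y assms edge_sym gdist_sym by auto
  with y gdist_le[of V E n y u] assms show thesis using that by fastforce
qed

lemma gdist_intermediate:
  assumes "x \<in> V" "u \<in> V" "gdist V E x u = n" "m \<le> n"
  obtains w where "w \<in> V" "gdist V E x w = m" "gdist V E w u = n - m"
  using assms
proof (induction n arbitrary: x m thesis)
  case 0
  then show ?case using gdist_eq_0_iff by fastforce
next
  case (Suc n)
  show ?case
  proof (cases m)
    case 0
    then show ?thesis using Suc.prems gdist_eq_0_iff by fastforce
  next
    case (Suc m')
    obtain y where y: "E x y" "gdist V E y u = n" using gdist_SucE Suc.prems by metis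
    obtain w where w: "w \<in> V" "gdist V E y w = m'" "gdist V E w u = n - m'"
      using Suc.IH[of y m'] y edge_in_V Suc.prems \<open>m = Suc m'\<close> by auto
    have "gdist V E x w \<le> Suc m'"
      using gdist_edge_le[of w y x] edge_sym y w gdist_sym Suc.prems edge_in_V by fastforce
    moreover have "gdist V E x u \<le> gdist V E x w + gdist V E w u"
      using gdist_triangle w Suc.prems by blast
    ultimately show ?thesis using Suc.prems w \<open>m = Suc m'\<close> by auto
  qed
qed

lemma card_vertices_nonzero: "z \<in> V \<Longrightarrow> P z \<Longrightarrow> card {w\<in>V. P w} \<noteq> 0"
  using finite_V by auto

end

locale distance_regular_graph =
  fixes V :: "'v set" and E :: "'v \<Rightarrow> 'v \<Rightarrow> bool" and D :: nat and a b c :: "nat \<Rightarrow> nat"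
  assumes distance_regular: "distance_regular V E D a b c"

sublocale distance_regular_graph \<subseteq> connected_graph
  using distance_regular unfolding distance_regular_def by unfold_locales blast

context distance_regular_graph
begin

lemma intersection_numbers:
  assumes "i \<le> D" "x \<in> V" "y \<in> V" "gdist V E x y = i"
  shows a_card: "card {z\<in>V. E y z \<and> gdist V E x z = i} = a i"
    and b_card: "card {z\<in>V. E y z \<and> gdist V E x z = i + 1} = b i"
    and c_card: "1 \<le> i \<Longrightarrow> card {z\<in>V. E y z \<and> gdist V E x z + 1 = i} = c i"
  using distance_regular assms unfolding distance_regular_def by simp_all

lemma diameter_attained: obtains x u where "x \<in> V" "u \<in> V" "gdist V E x u = D"
proof -
  let ?S = "{gdist V E x y | x y. x \<in> V \<and> y \<in> V}"
  have "?S = (\<lambda>(x, y). gdist V E x y) ` (V \<times> V)" by auto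
  then have "finite ?S" using finite_V by simp
  moreover have "?S \<noteq> {}" using V_nonempty by blast
  ultimately have "Max ?S \<in> ?S" by (rule Max_in)
  moreover have "D = Max ?S"
    using distance_regular unfolding distance_regular_def diameter_def by blast
  ultimately have "D \<in> ?S" by simp
  then show thesis using that by blast
qed

lemma geodesic_edge:
  assumes "i < D"
  obtains x y z where "x \<in> V" "E y z" "gdist V E x y = i" "gdist V E x z = Suc i"
proof -
  obtain x u where xu: "x \<in> V" "u \<in> V" "gdist V E x u = D" by (rule diameter_attained)
  obtain z where z: "z \<in> V" "gdist V E x z = Suc i"
    using gdist_intermediate[OF xu, of "Suc i"] assms by auto
  obtain y where y: "y \<in> V" "gdist V E x y = i" "gdist V E y z = 1"
    using gdist_intermediate[OF xu(1) z(1,2), of i] by auto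
  show thesis using that xu z y gdist_eq_1_iff by blast
qed

lemma a_0: "a 0 = 0"
proof -
  obtain x where "x \<in> V" using V_nonempty by blast
  then have "card {z\<in>V. E x z \<and> gdist V E x z = 0} = a 0"
    using a_card[of 0 x x] gdist_eq_0_iff by auto
  moreover have "{z\<in>V. E x z \<and> gdist V E x z = 0} = {}"
    using gdist_eq_0_iff edge_irrefl \<open>x \<in> V\<close> by auto
  ultimately show ?thesis by simp
qed

lemma c_1: "1 \<le> D \<Longrightarrow> c 1 = 1"
proof -
  assume "1 \<le> D"
  then have "0 < D" by simp
  then obtain x y z where xyz: "x \<in> V" "E y z" "gdist V E x y = 0" "gdist V E x z = Suc 0"
    by (rule geodesic_edge)
  then have "y \<in> V" "z \<in> V" using edge_in_V by auto
  then have "y = x" using xyz gdist_eq_0_iff by blast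
  have "E z x" using xyz \<open>y = x\<close> edge_sym by blast
  then have "{w\<in>V. E z w \<and> gdist V E x w + 1 = 1} = {x}"
    using gdist_eq_0_iff[OF \<open>x \<in> V\<close>] xyz by auto
  then show ?thesis using c_card[of 1 x z] xyz \<open>z \<in> V\<close> \<open>1 \<le> D\<close> by simp
qed

lemma b_nonzero: "i < D \<Longrightarrow> b i \<noteq> 0"
proof -
  assume "i < D"
  then obtain x y z where xyz: "x \<in> V" "E y z" "gdist V E x y = i" "gdist V E x z = Suc i"
    by (rule geodesic_edge)
  then show ?thesis
    using b_card[of i x y] card_vertices_nonzero[of z "\<lambda>w. E y w \<and> gdist V E x w = i + 1"]
      \<open>i < D\<close> edge_in_V by simp
qed

lemma valency:
  assumes "1 \<le> i" "i \<le> D"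
  shows "a i + b i + c i = b 0"
proof -
  obtain x u where xu: "x \<in> V" "u \<in> V" "gdist V E x u = D" by (rule diameter_attained)
  obtain y where y: "y \<in> V" "gdist V E x y = i"
    using gdist_intermediate[OF xu, of i] assms by auto
  let ?N = "{z\<in>V. E y z}"
  let ?C = "{z\<in>V. E y z \<and> gdist V E x z + 1 = i}"
  let ?A = "{z\<in>V. E y z \<and> gdist V E x z = i}"
  let ?B = "{z\<in>V. E y z \<and> gdist V E x z = i + 1}"
  have "{z\<in>V. E y z \<and> gdist V E y z = 0 + 1} = ?N" using gdist_eq_1_iff y by auto
  then have "card ?N = b 0" using b_card[of 0 y y] y gdist_eq_0_iff by simp
  moreover have "?N = ?C \<union> (?A \<union> ?B)"
  proof -
    have "gdist V E x z \<le> i + 1 \<and> i \<le> gdist V E x z + 1" if "E y z" for z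
      using gdist_edge_le[of x y z] gdist_edge_le[of x z y] edge_sym that xu y by auto
    then show ?thesis by fastforce
  qed
  moreover have "card (?C \<union> (?A \<union> ?B)) = card ?C + (card ?A + card ?B)"
    using finite_V by (subst card_Un_disjoint; auto)+
  ultimately show ?thesis
    using a_card[of i x y] b_card[of i x y] c_card[of i x y] assms xu y by simp
qed

lemma a2_nonzero:
  assumes "a 1 \<noteq> 0" "3 \<le> D"
  shows "a 2 \<noteq> 0"
proof -
  obtain x u0 where xu0: "x \<in> V" "u0 \<in> V" "gdist V E x u0 = D" by (rule diameter_attained)
  obtain u where u: "u \<in> V" "gdist V E x u = 3"
    using gdist_intermediate[OF xu0, of 3] assms by auto
  obtain z where z: "z \<in> V" "gdist V E x z = 2" "gdist V E z u = 1"
    using gdist_intermediate[OF xu0(1) u(1,2), of 2] by auto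
  obtain y where y: "y \<in> V" "gdist V E x y = 1" "gdist V E y z = 1"
    using gdist_intermediate[OF xu0(1) z(1,2), of 1] by auto
  have "card {w\<in>V. E z w \<and> gdist V E y w = 1} \<noteq> 0"
    using a_card[of 1 y z] y z assms by simp
  then have "{w\<in>V. E z w \<and> gdist V E y w = 1} \<noteq> {}" by (metis card.empty)
  then obtain w where w: "w \<in> V" "E z w" "gdist V E y w = 1" by blast
  have "E y w" "E w z" using w y gdist_eq_1_iff edge_sym by blast+
  then have xw: "gdist V E x w \<le> 2" "2 \<le> gdist V E x w + 1"
    using gdist_edge_le[of x y w] gdist_edge_le[of x w z] xu0 y z by simp_all
  show ?thesis
  proof (cases "gdist V E x w = 2")
    case True
    then show ?thesis
      using a_card[of 2 x z] card_vertices_nonzero[of w "\<lambda>v. E z v \<and> gdist V E x v = 2"]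
        w xu0 z assms by simp
  next
    case False
    with xw have "gdist V E x w = 1" by simp
    have far_from_u: "gdist V E u v = 2" if "v \<in> V" "E z v" "gdist V E x v = 1" for v
    proof -
      have "gdist V E u v \<le> 2"
        using gdist_edge_le[of u z v] gdist_sym[of u z] that u z by simp
      moreover have "gdist V E x u \<le> gdist V E x v + gdist V E v u"
        using gdist_triangle that u xu0 by blast
      ultimately show ?thesis using gdist_sym[of u v] that u xu0 by auto
    qed
    have "E z y" using y z gdist_eq_1_iff gdist_sym by metis
    then have "gdist V E u y = 2" "gdist V E u w = 2"
      using far_from_u \<open>gdist V E x w = 1\<close> w y by blast+
    then show ?thesis
      using a_card[of 2 u y] card_vertices_nonzero[of w "\<lambda>v. E y v \<and> gdist V E u v = 2"]
        \<open>E y w\<close> w u y assms by simp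
  qed
qed

end

lemma pseudo_cosine_theta:
  assumes "pseudo_cosine D a b c \<theta> f" "0 < D" "a 0 = 0"
  shows "\<theta> = real (b 0) * f 1"
proof -
  have "f 0 = 1" "real (a 0) * f 0 + real (b 0) * f 1 = \<theta> * f 0"
    using assms unfolding pseudo_cosine_def by auto
  then show ?thesis using assms(3) by simp
qed

lemma pseudo_cosine_recurrence:
  assumes "pseudo_cosine D a b c \<theta> f" "a 0 = 0" "0 < i" "i < D"
  shows "real (c i) * f (i - 1) + real (a i) * f i + real (b i) * f (i + 1) = real (b 0) * f 1 * f i"
  using assms pseudo_cosine_theta[OF assms(1)] unfolding pseudo_cosine_def by auto

locale tight_pseudo_cosine_pair =
  fixes D :: nat and a b c :: "nat \<Rightarrow> nat" and \<sigma> \<rho> :: "nat \<Rightarrow> real" and \<epsilon> :: real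
  assumes diameter_ge_3: "3 \<le> D"
    and a_0: "a 0 = 0" and c_1: "c 1 = 1" and valency: "a 1 + b 1 + c 1 = b 0"
    and a1_nonzero: "a 1 \<noteq> 0" and b1_nonzero: "b 1 \<noteq> 0"
    and a2_nonzero: "a 2 \<noteq> 0" and b2_nonzero: "b 2 \<noteq> 0"
    and sigma: "nontrivial_pc D a b c \<sigma>" and rho: "nontrivial_pc D a b c \<rho>"
    and tight: "tight_pair D a b c \<sigma> \<rho>"
    and eps: "auxiliary_parameter D \<sigma> \<rho> \<epsilon>"
begin

abbreviation k :: real where "k \<equiv> real (b 0)"

lemma k_eq: "k = 1 + real (a 1) + real (b 1)"
  using valency c_1 by (metis add.commute add.left_commute of_nat_1 of_nat_add)

lemma sigma1_ne_1: "\<sigma> 1 \<noteq> 1" and rho1_ne_1: "\<rho> 1 \<noteq> 1"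
  using sigma rho unfolding nontrivial_pc_def by blast+

lemma pc_sigma: "is_pseudo_cosine D a b c \<sigma>"
  and pc_rho: "is_pseudo_cosine D a b c \<rho>"
  and pc_product: "is_pseudo_cosine D a b c (\<lambda>i. \<sigma> i * \<rho> i)"
  using tight unfolding tight_pair_def by blast+

lemma recurrence_1:
  assumes "is_pseudo_cosine D a b c f"
  shows "1 + real (a 1) * f 1 + real (b 1) * f 2 = k * f 1 * f 1"
proof -
  obtain \<theta> where pc: "pseudo_cosine D a b c \<theta> f" using assms unfolding is_pseudo_cosine_def by blast
  then have "f 0 = 1" unfolding pseudo_cosine_def by blast
  then show ?thesis
    using pseudo_cosine_recurrence[OF pc a_0, of 1] c_1 diameter_ge_3 by (simp add: numeral_2_eq_2)
qed

lemma recurrence_2: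
  assumes "is_pseudo_cosine D a b c f"
  shows "real (c 2) * f 1 + real (a 2) * f 2 + real (b 2) * f 3 = k * f 1 * f 2"
proof -
  obtain \<theta> where pc: "pseudo_cosine D a b c \<theta> f" using assms unfolding is_pseudo_cosine_def by blast
  then show ?thesis using pseudo_cosine_recurrence[OF pc a_0, of 2] diameter_ge_3 by simp
qed

lemma auxiliary_eq:
  "1 \<le> i \<Longrightarrow> i \<le> D \<Longrightarrow>
    \<sigma> i * \<rho> i - \<sigma> (i - 1) * \<rho> (i - 1) = \<epsilon> * (\<sigma> (i - 1) * \<rho> i - \<sigma> i * \<rho> (i - 1))"
  using eps unfolding auxiliary_parameter_def by simp

lemma auxiliary_eq_1: "\<sigma> 1 * \<rho> 1 - 1 = \<epsilon> * (\<rho> 1 - \<sigma> 1)"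
proof -
  have "\<sigma> 0 = 1" "\<rho> 0 = 1"
    using pc_sigma pc_rho unfolding is_pseudo_cosine_def pseudo_cosine_def by blast+
  then show ?thesis using auxiliary_eq[of 1] diameter_ge_3 by simp
qed

lemma auxiliary_eq_3: "\<sigma> 3 * \<rho> 3 - \<sigma> 2 * \<rho> 2 = \<epsilon> * (\<sigma> 2 * \<rho> 3 - \<sigma> 3 * \<rho> 2)"
  using auxiliary_eq[of 3] diameter_ge_3 by (simp add: numeral_3_eq_3 numeral_2_eq_2)

lemma tight_relation: "k * (1 + \<sigma> 1) * (1 + \<rho> 1) + real (a 1) * (k * \<sigma> 1 * \<rho> 1 - 1) = 0"
proof -
  have "(1 - \<sigma> 1) * (1 - \<rho> 1) * (k * (1 + \<sigma> 1) * (1 + \<rho> 1) + real (a 1) * (k * \<sigma> 1 * \<rho> 1 - 1)) = 0"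
    using recurrence_1[OF pc_sigma] recurrence_1[OF pc_rho] recurrence_1[OF pc_product] k_eq by algebra
  then show ?thesis using sigma1_ne_1 rho1_ne_1 by simp
qed

lemma sigma1_ne_minus_1: "\<sigma> 1 \<noteq> -1"
proof
  assume s: "\<sigma> 1 = -1"
  have "real (a 1) * (k * \<rho> 1 + 1) = 0" using tight_relation s by algebra
  then have kr: "k * \<rho> 1 = -1" using a1_nonzero by simp
  then have "\<rho> 1 \<noteq> 0" by auto
  have "k \<noteq> 1" using k_eq a1_nonzero by simp
  then have "\<rho> 1 \<noteq> -1" using kr by auto
  moreover have "(\<rho> 1 + 1) * (\<epsilon> + 1) = 0" using auxiliary_eq_1 s by algebra
  ultimately have eps: "\<epsilon> = -1" by simp
  have "real (b 1) * (\<sigma> 2 - 1) = 2 * real (a 1)" using recurrence_1[OF pc_sigma] s k_eq by algebra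
  then have "real (b 1) * (\<sigma> 2 - 1) > 0" using a1_nonzero by simp
  then have "\<sigma> 2 > 1" by (simp add: zero_less_mult_iff)
  have "real (b 1) * (\<rho> 2 - \<rho> 1) = 0" using recurrence_1[OF pc_rho] kr k_eq by algebra
  then have r2: "\<rho> 2 = \<rho> 1" using b1_nonzero by simp
  have "(\<sigma> 3 + \<sigma> 2) * (\<rho> 3 - \<rho> 2) = 0" using auxiliary_eq_3 eps by algebra
  then consider "\<rho> 3 = \<rho> 2" | "\<sigma> 3 = - \<sigma> 2" by (auto simp: add_eq_0_iff)
  then show False
  proof cases
    case 1
    have "\<rho> 1 * (real (c 2) + real (a 2) + real (b 2) + 1) = 0"
      using recurrence_2[OF pc_rho] 1 r2 kr by algebra
    then show False using \<open>\<rho> 1 \<noteq> 0\<close> by (simp add: add_nonneg_eq_0_iff)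
  next
    case 2
    have "\<rho> 1 * (2 * real (a 2) * \<sigma> 2 + real (c 2) * (\<sigma> 2 - 1)) = 0"
      using recurrence_2[OF pc_product] recurrence_2[OF pc_rho] 2 s r2 kr by algebra
    moreover have "2 * real (a 2) * \<sigma> 2 + real (c 2) * (\<sigma> 2 - 1) > 0"
      using a2_nonzero \<open>\<sigma> 2 > 1\<close> by (simp add: add_pos_nonneg)
    ultimately show False using \<open>\<rho> 1 \<noteq> 0\<close> by simp
  qed
qed

lemma rho1_ne_0: "\<rho> 1 \<noteq> 0"
proof
  assume r: "\<rho> 1 = 0"
  have "1 + real (b 1) * \<rho> 2 = 0" using recurrence_1[OF pc_rho] r by simp
  then have "\<rho> 2 \<noteq> 0" by auto
  have "1 + real (b 1) * (\<sigma> 2 * \<rho> 2) = 0" using recurrence_1[OF pc_product] r by simp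
  then have "real (b 1) * \<rho> 2 * (\<sigma> 2 - 1) = 0" using \<open>1 + real (b 1) * \<rho> 2 = 0\<close> by algebra
  then have s2: "\<sigma> 2 = 1" using b1_nonzero \<open>\<rho> 2 \<noteq> 0\<close> by simp
  have es: "\<epsilon> * \<sigma> 1 = 1" using auxiliary_eq_1 r by algebra
  have r3: "real (a 2) * \<rho> 2 + real (b 2) * \<rho> 3 = 0" using recurrence_2[OF pc_rho] r by simp
  have "real (b 2) * (\<rho> 3 * (\<sigma> 3 - 1)) = 0" using recurrence_2[OF pc_product] r s2 r3 by algebra
  then consider "\<rho> 3 = 0" | "\<sigma> 3 = 1" using b2_nonzero by auto
  then show False
  proof cases
    case 1
    then show False using r3 a2_nonzero \<open>\<rho> 2 \<noteq> 0\<close> by simp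
  next
    case 2
    have "(\<sigma> 1 - 1) * (\<rho> 3 - \<rho> 2) = 0" using auxiliary_eq_3 s2 2 es by algebra
    then have "\<rho> 3 = \<rho> 2" using sigma1_ne_1 by simp
    then have "(real (a 2) + real (b 2)) * \<rho> 2 = 0" using r3 by (simp add: algebra_simps)
    then show False using a2_nonzero \<open>\<rho> 2 \<noteq> 0\<close> by (simp add: add_nonneg_eq_0_iff)
  qed
qed

lemma rho1_ne_sigma1: "\<rho> 1 \<noteq> \<sigma> 1"
proof
  assume "\<rho> 1 = \<sigma> 1"
  then have "\<sigma> 1 * \<sigma> 1 = 1" using auxiliary_eq_1 by simp
  then show False using sigma1_ne_1 sigma1_ne_minus_1 square_eq_1_iff by blast
qed

lemma one_minus_eps_sigma1_ne_0: "1 - \<epsilon> * \<sigma> 1 \<noteq> 0"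
proof
  assume "1 - \<epsilon> * \<sigma> 1 = 0"
  moreover have "(\<rho> 1 - \<sigma> 1) * (1 - \<epsilon> * \<sigma> 1) = \<rho> 1 * (1 - \<sigma> 1) * (1 + \<sigma> 1)"
    using auxiliary_eq_1 by algebra
  ultimately show False
    using rho1_ne_0 sigma1_ne_1 sigma1_ne_minus_1 by (simp add: add_eq_0_iff)
qed

lemma sigma1_sq_minus_sigma2:
  "real (b 1) * (\<sigma> 1 ^ 2 - \<sigma> 2) = (1 - \<sigma> 1) * ((1 + real (a 1)) * \<sigma> 1 + 1)"
  using recurrence_1[OF pc_sigma] k_eq by algebra

lemma sigma1_sq_ne_sigma2: "\<sigma> 1 ^ 2 \<noteq> \<sigma> 2"
proof
  assume "\<sigma> 1 ^ 2 = \<sigma> 2"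
  then have "(1 + real (a 1)) * \<sigma> 1 + 1 = 0"
    using sigma1_sq_minus_sigma2 sigma1_ne_1 by simp
  then have "real (a 1) * real (b 1) = 0" using tight_relation k_eq by algebra
  then show False using a1_nonzero b1_nonzero by simp
qed

lemma valency_identity:
  "k * ((\<sigma> 1 ^ 2 - \<sigma> 2) * (1 - \<epsilon> * \<sigma> 1)) = (1 - \<sigma> 2) * (\<epsilon> - \<sigma> 1)"
proof -
  have "real (b 1) * (\<rho> 1 - \<sigma> 1) *
      (k * ((\<sigma> 1 ^ 2 - \<sigma> 2) * (1 - \<epsilon> * \<sigma> 1)) - (1 - \<sigma> 2) * (\<epsilon> - \<sigma> 1)) = 0"
    using recurrence_1[OF pc_sigma] auxiliary_eq_1 tight_relation k_eq by algebra
  then show ?thesis using b1_nonzero rho1_ne_sigma1 by simp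
qed

lemma valency_formula:
  "k = (1 - \<sigma> 1) * (1 - \<sigma> 2) / ((\<sigma> 1 ^ 2 - \<sigma> 2) * (1 - \<epsilon> * \<sigma> 1)) * (\<sigma> 1 - \<epsilon>) / (\<sigma> 1 - 1)"
proof -
  define N where "N = (\<sigma> 1 ^ 2 - \<sigma> 2) * (1 - \<epsilon> * \<sigma> 1)"
  have "N \<noteq> 0" "\<sigma> 1 - 1 \<noteq> 0"
    using sigma1_sq_ne_sigma2 one_minus_eps_sigma1_ne_0 sigma1_ne_1 unfolding N_def by simp_all
  then have "(1 - \<sigma> 1) * (1 - \<sigma> 2) / N * (\<sigma> 1 - \<epsilon>) / (\<sigma> 1 - 1) = (1 - \<sigma> 2) * (\<epsilon> - \<sigma> 1) / N"
    by (simp add: field_simps)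
  also have "\<dots> = k"
    using valency_identity \<open>N \<noteq> 0\<close> unfolding N_def by (simp add: field_simps)
  finally show ?thesis unfolding N_def by simp
qed

end

theorem lemma13p1:
  fixes V :: "'v set" and E :: "'v \<Rightarrow> 'v \<Rightarrow> bool"
    and D :: nat and a b c :: "nat \<Rightarrow> nat"
    and \<sigma> \<rho> :: "nat \<Rightarrow> real" and \<epsilon> :: real
  assumes drg: "distance_regular V E D a b c"
    and D3: "D \<ge> 3"
    and a1: "a 1 \<noteq> 0"
    and sig: "nontrivial_pc D a b c \<sigma>"
    and rho: "nontrivial_pc D a b c \<rho>"
    and tight: "tight_pair D a b c \<sigma> \<rho>"
    and eps: "auxiliary_parameter D \<sigma> \<rho> \<epsilon>"
  shows "\<sigma> 1 \<noteq> 1 \<and>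
         (\<sigma> 1 ^ 2 - \<sigma> 2) * (1 - \<epsilon> * \<sigma> 1) \<noteq> 0 \<and>
         (let h = ((1 - \<sigma> 1) * (1 - \<sigma> 2)) / ((\<sigma> 1 ^ 2 - \<sigma> 2) * (1 - \<epsilon> * \<sigma> 1))
          in real (b 0) = h * (\<sigma> 1 - \<epsilon>) / (\<sigma> 1 - 1))"
proof -
  interpret G: distance_regular_graph V E D a b c
    using drg by (rule distance_regular_graph.intro)
  interpret T: tight_pseudo_cosine_pair D a b c \<sigma> \<rho> \<epsilon>
    by (rule tight_pseudo_cosine_pair.intro)
      (use D3 a1 sig rho tight eps G.a_0 G.c_1 G.valency[of 1] G.b_nonzero[of 1]
        G.b_nonzero[of 2] G.a2_nonzero[OF a1 D3] in auto)
  show ?thesis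
    using T.sigma1_ne_1 T.sigma1_sq_ne_sigma2 T.one_minus_eps_sigma1_ne_0 T.valency_formula
    unfolding Let_def by simp
qed

end
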